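(* The relation $\prec$ on phasers, restricted to the set $\mathcal{P}^{WO}$ of well-ordered phasers, is a causality relation: (i) for all $P,Q,R\in\mathcal{P}^{WO}$, if $P\prec Q$ and $Q\prec R$ then $P\prec R$; (ii) for all $P\in\mathcal{P}^{WO}$, $\neg(P\prec P)$; (iii) for all $P,Q\in\mathcal{P}^{WO}$, if $P\prec Q$ then $\neg(Q\prec P)$.
   Context: A view is a record $v=(\mathrm{sp}(v),\mathrm{wp}(v),\mathrm{mode}(v))$ with $\mathrm{sp}(v),\mathrm{wp}(v)\in\mathbb{N}$ and $\mathrm{mode}(v)\in\{\mathtt{SW},\mathtt{SO},\mathtt{WO}\}$. $\mathrm{CanSignal}(v)$ iff $\mathrm{mode}(v)\in\{\mathtt{SW},\mathtt{SO}\}$; $\mathrm{CanWait}(v)$ iff $\mathrm{mode}(v)\in\{\mathtt{SW},\mathtt{WO}\}$. A phaser $P$ is a finite partial map from task identifiers to views. For views, $v_1\prec v_2$ iff $\mathrm{CanSignal}(v_1)$, $\mathrm{sp}(v_1)<\mathrm{wp}(v_2)$ and $\mathrm{CanWait}(v_2)$; and $v_1\unrhd v_2$ iff $\mathrm{mode}(v_1)=\mathtt{WO}$ or $\mathrm{sp}(v_1)\ge\mathrm{wp}(v_2)$ or $\mathrm{mode}(v_2)=\mathtt{SO}$. For phasers, $P\prec Q$ iff there exist $t\in\mathrm{dom}\,P$, $t'\in\mathrm{dom}\,Q$ with $P(t)\prec Q(t')$; $P\unrhd Q$ iff $P(t)\unrhd Q(t')$ for all $t\in\mathrm{dom}\,P$,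 $t'\in\mathrm{dom}\,Q$. $P$ is well-ordered iff $P\unrhd P$. *)

theory Defs
  imports Main
begin

datatype mode = SW | SO | WO

record view =
  sp :: nat
  wp :: nat
  vmode :: mode

definition can_signal :: "view \<Rightarrow> bool" where
  "can_signal v \<longleftrightarrow> vmode v \<in> {SW, SO}"

definition can_wait :: "view \<Rightarrow> bool" where
  "can_wait v \<longleftrightarrow> vmode v \<in> {SW, WO}"

definition view_prec :: "view \<Rightarrow> view \<Rightarrow> bool" where
  "view_prec v1 v2 \<longleftrightarrow> can_signal v1 \<and> sp v1 < wp v2 \<and> can_wait v2"

definition view_ge :: "view \<Rightarrow> view \<Rightarrow> bool" where
  "view_ge v1 v2 \<longleftrightarrow> vmode v1 = WO \<or> sp v1 \<ge> wp v2 \<or> vmode v2 = SO"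

type_synonym 't phaser = "'t \<rightharpoonup> view"

definition is_phaser :: "'t phaser \<Rightarrow> bool" where
  "is_phaser P \<longleftrightarrow> finite (dom P)"

definition phaser_prec :: "'t phaser \<Rightarrow> 't phaser \<Rightarrow> bool" where
  "phaser_prec P Q \<longleftrightarrow>
     (\<exists>t\<in>dom P. \<exists>t'\<in>dom Q. view_prec (the (P t)) (the (Q t')))"

definition phaser_ge :: "'t phaser \<Rightarrow> 't phaser \<Rightarrow> bool" where
  "phaser_ge P Q \<longleftrightarrow>
     (\<forall>t\<in>dom P. \<forall>t'\<in>dom Q. view_ge (the (P t)) (the (Q t')))"

definition well_ordered :: "'t phaser \<Rightarrow> bool" where
  "well_ordered P \<longleftrightarrow> phaser_ge P P"

definition wo_phasers :: "'t phaser set" where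
  "wo_phasers = {P. is_phaser P \<and> well_ordered P}"

end

theory Submission
  imports Defs
begin

text \<open>
  If \<open>v\<^sub>1 \<prec> v\<^sub>2\<close> and \<open>w\<^sub>1 \<prec> w\<^sub>2\<close> with \<open>w\<^sub>1 \<unrhd> v\<^sub>2\<close>, then \<open>w\<^sub>1\<close> can signal and
  \<open>v\<^sub>2\<close> can wait, so \<open>w\<^sub>1 \<unrhd> v\<^sub>2\<close> forces \<open>sp w\<^sub>1 \<ge> wp v\<^sub>2\<close>; hence
  \<open>sp v\<^sub>1 < wp v\<^sub>2 \<le> sp w\<^sub>1 < wp w\<^sub>2\<close> and \<open>v\<^sub>1 \<prec> w\<^sub>2\<close>. Well-orderedness of the
  middle phaser provides exactly this \<open>\<unrhd>\<close> between its views, which gives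
  transitivity; irreflexivity is the special case \<open>v = w\<close>.
\<close>

lemma view_prec_trans_via_ge:
  assumes "view_prec v1 v2" "view_ge w1 v2" "view_prec w1 w2"
  shows "view_prec v1 w2"
  using assms unfolding view_prec_def view_ge_def can_signal_def can_wait_def by auto

lemma view_ge_imp_not_prec:
  assumes "view_ge v w"
  shows "\<not> view_prec v w"
  using assms unfolding view_prec_def view_ge_def can_signal_def can_wait_def by auto

lemma phaser_prec_trans:
  assumes "well_ordered Q" "phaser_prec P Q" "phaser_prec Q R"
  shows "phaser_prec P R"
proof -
  obtain a b where ab: "a \<in> dom P" "b \<in> dom Q" "view_prec (the (P a)) (the (Q b))"
    using assms(2) unfolding phaser_prec_def by blast
  obtain c d where cd: "c \<in> dom Q" "d \<in> dom R" "view_prec (the (Q c)) (the (R d))"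
    using assms(3) unfolding phaser_prec_def by blast
  have "view_ge (the (Q c)) (the (Q b))"
    using assms(1) ab(2) cd(1) unfolding well_ordered_def phaser_ge_def by blast
  then have "view_prec (the (P a)) (the (R d))"
    using ab(3) cd(3) by (blast intro: view_prec_trans_via_ge)
  with ab(1) cd(2) show ?thesis unfolding phaser_prec_def by blast
qed

lemma well_ordered_imp_not_phaser_prec_self:
  assumes "well_ordered P"
  shows "\<not> phaser_prec P P"
  using assms view_ge_imp_not_prec
  unfolding well_ordered_def phaser_ge_def phaser_prec_def by blast

lemma wo_phasers_well_ordered: "P \<in> wo_phasers \<Longrightarrow> well_ordered P"
  unfolding wo_phasers_def by blast

theorem theorem1:
  shows "(\<forall>P\<in>wo_phasers. \<forall>Q\<in>wo_phasers. \<forall>R\<in>wo_phasers.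
            phaser_prec P Q \<longrightarrow> phaser_prec Q R \<longrightarrow> phaser_prec P R)
       \<and> (\<forall>P\<in>wo_phasers. \<not> phaser_prec P P)
       \<and> (\<forall>P\<in>wo_phasers. \<forall>Q\<in>wo_phasers. phaser_prec P Q \<longrightarrow> \<not> phaser_prec Q P)"
proof (intro conjI ballI impI)
  fix P Q R
  assume "Q \<in> wo_phasers" "phaser_prec P Q" "phaser_prec Q R"
  then show "phaser_prec P R"
    using phaser_prec_trans wo_phasers_well_ordered by blast
next
  fix P assume "P \<in> wo_phasers"
  then show "\<not> phaser_prec P P"
    using well_ordered_imp_not_phaser_prec_self wo_phasers_well_ordered by blast
next
  fix P Q
  assume "P \<in> wo_phasers" "Q \<in> wo_phasers" "phaser_prec P Q"
  then show "\<not> phaser_prec Q P"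
    using phaser_prec_trans well_ordered_imp_not_phaser_prec_self wo_phasers_well_ordered
    by blast
qed

end
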